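(* Let $(X,(\cdot,\cdot|\cdot))$ be a 2-inner product space over $\mathbb{K}\in\{\mathbb{R},\mathbb{C}\}$, let $n$ be a positive integer, and let $x,y_1,\dots,y_n,z\in X$. Then \[ \sum_{i=1}^{n}\left|(x,y_i|z)\right|^2\le \|x|z\|^2\left\{\max_{1\le i\le n}\|y_i|z\|^2+(n-1)\max_{1\le i\ne j\le n}\left|(y_i,y_j|z)\right|\right\}. \]
   Context: A 2-inner product on a linear space $X$ of dimension greater than $1$ over $\mathbb{K}$ ($\mathbb{K}=\mathbb{R}$ or $\mathbb{C}$) is a function $(\cdot,\cdot|\cdot):X\times X\times X\to\mathbb{K}$ such that for all $x,x',y,z\in X$ and $\alpha\in\mathbb{K}$: (i) $(x,x|z)\ge 0$, and $(x,x|z)=0$ iff $x$ and $z$ are linearly dependent; (ii) $(x,x|z)=(z,z|x)$; (iii) $(y,x|z)=\overline{(x,y|z)}$; (iv) $(\alpha x,y|z)=\alpha(x,y|z)$; (v) $(x+x',y|z)=(x,y|z)+(x',y|z)$. The associated 2-norm is $\|x|z\|=\sqrt{(x,x|z)}$. The maximum $\max_{1\le i\ne j\le n}$ is over all pairs $(i,j)$ with $i\ne j$. *)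

theory Defs
  imports Complex_Main
begin

text \<open>K is real (conjugation = id) or complex (conjugation = cnj).\<close>

definition lin_dep :: "('k::field \<Rightarrow> 'v::ab_group_add \<Rightarrow> 'v) \<Rightarrow> 'v \<Rightarrow> 'v \<Rightarrow> bool" where
  "lin_dep scale x z \<longleftrightarrow> (\<exists>a b. (a \<noteq> 0 \<or> b \<noteq> 0) \<and> scale a x + scale b z = 0)"

text \<open>2-inner product on the linear space (X, scale) of dimension > 1, with
  conjugation cj on the scalars.\<close>
definition is_2ip ::
  "('k::real_normed_field \<Rightarrow> 'v::ab_group_add \<Rightarrow> 'v) \<Rightarrow> ('k \<Rightarrow> 'k) \<Rightarrow> ('v \<Rightarrow> 'v \<Rightarrow> 'v \<Rightarrow> 'k) \<Rightarrow> bool" where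
  "is_2ip scale cj ip \<longleftrightarrow>
     vector_space scale \<and>
     (\<exists>u v. \<not> lin_dep scale u v) \<and>
     (\<forall>x z. \<exists>r::real. r \<ge> 0 \<and> ip x x z = of_real r) \<and>
     (\<forall>x z. ip x x z = 0 \<longleftrightarrow> lin_dep scale x z) \<and>
     (\<forall>x z. ip x x z = ip z z x) \<and>
     (\<forall>x y z. ip y x z = cj (ip x y z)) \<and>
     (\<forall>a x y z. ip (scale a x) y z = a * ip x y z) \<and>
     (\<forall>x x' y z. ip (x + x') y z = ip x y z + ip x' y z)"

definition two_norm :: "('v \<Rightarrow> 'v \<Rightarrow> 'v \<Rightarrow> 'k::real_normed_field) \<Rightarrow> 'v \<Rightarrow> 'v \<Rightarrow> real" where
  "two_norm ip x z = sqrt (norm (ip x x z))"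

end

theory Submission
  imports Defs
begin

(* Bombieri's argument. For a positive semidefinite hermitian form p (here p u v = (u, v|z))
   put c_i = p x y_i and w = \<Sum> c_i y_i. Then p x w = S := \<Sum> |c_i|^2, so Cauchy-Schwarz gives
   S^2 \<le> |p x x| |p w w|. Expanding p w w and using |c_i| |c_j| \<le> (|c_i|^2 + |c_j|^2)/2 off the
   diagonal gives |p w w| \<le> S (M1 + (n - 1) M2), and dividing by S yields the inequality. *)

lemma sum_off_diagonal_left:
  fixes f :: "'i \<Rightarrow> real"
  assumes "finite A"
  shows "(\<Sum>i\<in>A. \<Sum>j\<in>A - {i}. f i) = real (card A - 1) * sum f A"
proof -
  have "(\<Sum>i\<in>A. \<Sum>j\<in>A - {i}. f i) = (\<Sum>i\<in>A. real (card A - 1) * f i)"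
    using assms by (intro sum.cong) auto
  then show ?thesis by (simp add: sum_distrib_left)
qed

lemma sum_off_diagonal_right:
  fixes f :: "'i \<Rightarrow> real"
  assumes "finite A"
  shows "(\<Sum>i\<in>A. \<Sum>j\<in>A - {i}. f j) = real (card A - 1) * sum f A"
proof (cases "A = {}")
  case False
  have "(\<Sum>i\<in>A. \<Sum>j\<in>A - {i}. f j) = (\<Sum>i\<in>A. sum f A - f i)"
    using assms by (intro sum.cong) (auto simp: sum_diff1)
  also have "\<dots> = real (card A) * sum f A - sum f A"
    by (simp add: sum_subtractf)
  finally show ?thesis
    using False assms by (simp add: of_nat_diff Suc_leI card_gt_0_iff algebra_simps)
qed simp

lemma quadratic_form_le:
  fixes a :: "'i \<Rightarrow> real" and b :: "'i \<Rightarrow> 'i \<Rightarrow> real"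
  assumes "finite A"
    and b_nonneg: "\<And>i j. i \<in> A \<Longrightarrow> j \<in> A \<Longrightarrow> i \<noteq> j \<Longrightarrow> 0 \<le> b i j"
    and diag: "\<And>i. i \<in> A \<Longrightarrow> b i i \<le> M1"
    and off_diag: "\<And>i j. i \<in> A \<Longrightarrow> j \<in> A \<Longrightarrow> i \<noteq> j \<Longrightarrow> b i j \<le> M2"
  shows "(\<Sum>i\<in>A. \<Sum>j\<in>A. a i * a j * b i j) \<le> (\<Sum>i\<in>A. (a i)\<^sup>2) * (M1 + real (card A - 1) * M2)"
proof -
  have "(\<Sum>j\<in>A. a i * a j * b i j) \<le> (a i)\<^sup>2 * M1 + (\<Sum>j\<in>A - {i}. M2 / 2 * ((a i)\<^sup>2 + (a j)\<^sup>2))"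
    if i: "i \<in> A" for i
  proof -
    have "(\<Sum>j\<in>A. a i * a j * b i j) = (a i)\<^sup>2 * b i i + (\<Sum>j\<in>A - {i}. a i * a j * b i j)"
      using sum.remove[OF \<open>finite A\<close> i] by (simp add: power2_eq_square)
    also have "\<dots> \<le> (a i)\<^sup>2 * M1 + (\<Sum>j\<in>A - {i}. M2 / 2 * ((a i)\<^sup>2 + (a j)\<^sup>2))"
    proof (intro add_mono sum_mono)
      show "(a i)\<^sup>2 * b i i \<le> (a i)\<^sup>2 * M1"
        using diag[OF i] by (simp add: mult_left_mono)
    next
      fix j assume j: "j \<in> A - {i}"
      \<comment> \<open>no sign condition on \<open>M2\<close> is needed: here it dominates some \<open>b i j \<ge> 0\<close>\<close>
      have "a i * a j \<le> ((a i)\<^sup>2 + (a j)\<^sup>2) / 2"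
        using zero_le_power2[of "a i - a j"] by (simp add: power2_diff)
      then have "a i * a j * b i j \<le> ((a i)\<^sup>2 + (a j)\<^sup>2) / 2 * b i j"
        using b_nonneg i j by (intro mult_right_mono) auto
      also have "\<dots> \<le> ((a i)\<^sup>2 + (a j)\<^sup>2) / 2 * M2"
        using off_diag i j by (intro mult_left_mono) auto
      finally show "a i * a j * b i j \<le> M2 / 2 * ((a i)\<^sup>2 + (a j)\<^sup>2)"
        by (simp add: mult.commute)
    qed
    finally show ?thesis .
  qed
  then have "(\<Sum>i\<in>A. \<Sum>j\<in>A. a i * a j * b i j)
      \<le> (\<Sum>i\<in>A. (a i)\<^sup>2 * M1 + (\<Sum>j\<in>A - {i}. M2 / 2 * ((a i)\<^sup>2 + (a j)\<^sup>2)))"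
    by (rule sum_mono)
  also have "\<dots> = (\<Sum>i\<in>A. (a i)\<^sup>2) * M1
      + M2 / 2 * ((\<Sum>i\<in>A. \<Sum>j\<in>A - {i}. (a i)\<^sup>2) + (\<Sum>i\<in>A. \<Sum>j\<in>A - {i}. (a j)\<^sup>2))"
    by (simp only: sum.distrib sum_distrib_left[symmetric] sum_distrib_right[symmetric])
  also have "\<dots> = (\<Sum>i\<in>A. (a i)\<^sup>2) * (M1 + real (card A - 1) * M2)"
    unfolding sum_off_diagonal_left[OF \<open>finite A\<close>] sum_off_diagonal_right[OF \<open>finite A\<close>]
    by (simp add: algebra_simps)
  finally show ?thesis .
qed

lemma nonneg_quadratic_imp_le:
  fixes X N Y :: real
  assumes nonneg: "\<And>t. 0 \<le> X - 2 * t * N + t\<^sup>2 * N * Y"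
    and "0 \<le> N" and "0 \<le> Y"
  shows "N \<le> X * Y"
proof (cases "N = 0")
  case True
  then show ?thesis
    using nonneg[of 0] \<open>0 \<le> Y\<close> by simp
next
  case False
  have "Y \<noteq> 0"
  proof
    assume "Y = 0"
    then show False
      using nonneg[of "(X + 1) / (2 * N)"] False by (simp add: field_simps)
  qed
  then have "0 \<le> X - N / Y"
    using nonneg[of "1 / Y"] by (simp add: power2_eq_square field_simps)
  then show ?thesis
    using \<open>Y \<noteq> 0\<close> \<open>0 \<le> Y\<close> by (simp add: field_simps)
qed

locale conjugation =
  fixes cj :: "'k::real_normed_field \<Rightarrow> 'k"
  assumes cj_add: "cj (a + b) = cj a + cj b"
    and cj_mult: "cj (a * b) = cj a * cj b"
    and cj_cj: "cj (cj a) = a"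
    and cj_of_real: "cj (of_real r) = of_real r"
    and mult_cj: "a * cj a = of_real ((norm a)\<^sup>2)"
begin

lemma cj_zero: "cj 0 = 0"
  using cj_of_real[of 0] by simp

lemma norm_cj: "norm (cj a) = norm a"
proof -
  have "of_real ((norm (cj a))\<^sup>2) = (of_real ((norm a)\<^sup>2) :: 'k)"
    by (metis mult_cj cj_cj mult.commute)
  then show ?thesis
    by (metis of_real_eq_iff norm_ge_zero power2_eq_imp_eq)
qed

end

lemma conjugation_real: "conjugation (id :: real \<Rightarrow> real)"
  by unfold_locales (simp_all add: power2_eq_square)

lemma conjugation_complex: "conjugation cnj"
  by unfold_locales (simp_all add: complex_norm_square[symmetric])

locale hermitian_form = conjugation cj
  for cj :: "'k::real_normed_field \<Rightarrow> 'k" +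
  fixes scale :: "'k \<Rightarrow> 'v::ab_group_add \<Rightarrow> 'v"
    and p :: "'v \<Rightarrow> 'v \<Rightarrow> 'k"
  assumes add_left: "p (x + x') y = p x y + p x' y"
    and scale_left: "p (scale a x) y = a * p x y"
    and hermitian: "p y x = cj (p x y)"
    and self_nonneg: "\<exists>r \<ge> 0. p x x = of_real r"
begin

lemma zero_left: "p 0 y = 0"
  using add_left[of 0 0 y] by simp

lemma diff_left: "p (x - x') y = p x y - p x' y"
  using add_left[of "x - x'" x' y] by (simp add: algebra_simps)

lemma sum_left: "p (\<Sum>i\<in>A. f i) y = (\<Sum>i\<in>A. p (f i) y)"
  by (induction A rule: infinite_finite_induct) (simp_all add: zero_left add_left)

lemma add_right: "p x (y + y') = p x y + p x y'"
  by (metis hermitian add_left cj_add)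

lemma scale_right: "p x (scale a y) = cj a * p x y"
  by (metis hermitian scale_left cj_mult cj_cj)

lemma zero_right: "p x 0 = 0"
  by (metis hermitian zero_left cj_zero)

lemma diff_right: "p x (y - y') = p x y - p x y'"
  using add_right[of x "y - y'" y'] by (simp add: algebra_simps)

lemma sum_right: "p x (\<Sum>i\<in>A. f i) = (\<Sum>i\<in>A. p x (f i))"
  by (induction A rule: infinite_finite_induct) (simp_all add: zero_right add_right)

lemma self_eq_norm: "p x x = of_real (norm (p x x))"
  using self_nonneg[of x] by auto

lemma Cauchy_Schwarz: "(norm (p x y))\<^sup>2 \<le> norm (p x x) * norm (p y y)"
proof (rule nonneg_quadratic_imp_le)
  fix t :: real
  define c where "c = p x y"
  define s where "s = of_real t * c"
  define X where "X = norm (p x x)"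
  define Y where "Y = norm (p y y)"
  have "p x x = of_real X" and "p y y = of_real Y"
    unfolding X_def Y_def by (rule self_eq_norm)+
  moreover have "cj s * c = of_real (t * (norm c)\<^sup>2)" and "s * cj c = of_real (t * (norm c)\<^sup>2)"
    by (simp_all add: s_def cj_mult cj_of_real mult_cj algebra_simps)
  moreover have "s * cj s = of_real (t\<^sup>2 * (norm c)\<^sup>2)"
    by (simp add: mult_cj s_def norm_mult power_mult_distrib)
  moreover have "p (x - scale s y) (x - scale s y)
      = p x x - cj s * c - s * cj c + s * cj s * p y y"
    by (simp add: diff_left diff_right scale_left scale_right c_def algebra_simps flip: hermitian)
  ultimately have "p (x - scale s y) (x - scale s y)
      = of_real (X - 2 * t * (norm c)\<^sup>2 + t\<^sup>2 * (norm c)\<^sup>2 * Y)"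
    by simp
  then show "0 \<le> norm (p x x) - 2 * t * (norm (p x y))\<^sup>2 + t\<^sup>2 * (norm (p x y))\<^sup>2 * norm (p y y)"
    unfolding c_def X_def Y_def by (metis self_nonneg of_real_eq_iff)
qed simp_all

end

lemma (in hermitian_form) Bombieri_ineq:
  fixes y :: "'i \<Rightarrow> 'v"
  assumes "finite A" and "A \<noteq> {}"
    and diag: "\<And>i. i \<in> A \<Longrightarrow> norm (p (y i) (y i)) \<le> M1"
    and off_diag: "\<And>i j. i \<in> A \<Longrightarrow> j \<in> A \<Longrightarrow> i \<noteq> j \<Longrightarrow> norm (p (y i) (y j)) \<le> M2"
  shows "(\<Sum>i\<in>A. (norm (p x (y i)))\<^sup>2) \<le> norm (p x x) * (M1 + real (card A - 1) * M2)"
proof -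
  define c where "c i = p x (y i)" for i
  define S where "S = (\<Sum>i\<in>A. (norm (c i))\<^sup>2)"
  define K where "K = M1 + real (card A - 1) * M2"
  define w where "w = (\<Sum>i\<in>A. scale (c i) (y i))"
  have "p x w = (\<Sum>i\<in>A. c i * cj (c i))"
    by (simp add: w_def c_def sum_right scale_right mult.commute)
  then have pxw: "p x w = of_real S"
    by (simp add: S_def mult_cj)
  have "norm (p w w) = norm (\<Sum>i\<in>A. \<Sum>j\<in>A. cj (c i) * c j * p (y j) (y i))"
    by (simp add: w_def sum_left scale_left sum_right scale_right sum_distrib_left mult.assoc)
  also have "\<dots> \<le> (\<Sum>i\<in>A. \<Sum>j\<in>A. norm (c i) * norm (c j) * norm (p (y j) (y i)))"
    by (intro order_trans[OF norm_sum] sum_mono) (simp add: norm_mult norm_cj)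
  also have "\<dots> \<le> S * K"
    unfolding S_def K_def using \<open>finite A\<close> diag off_diag
    by (intro quadratic_form_le[where b = "\<lambda>i j. norm (p (y j) (y i))"]) auto
  finally have pww: "norm (p w w) \<le> S * K" .
  have "0 \<le> K"
  proof -
    obtain i where i: "i \<in> A"
      using \<open>A \<noteq> {}\<close> by blast
    have "0 \<le> M1"
      using diag[OF i] by (meson norm_ge_zero order_trans)
    moreover have "0 \<le> real (card A - 1) * M2"
    proof (cases "card A - 1 = 0")
      case False
      then have "A - {i} \<noteq> {}"
        using i \<open>finite A\<close> by (metis card.empty card_Diff_singleton)
      then obtain j where "j \<in> A" "i \<noteq> j"
        by blast
      then have "0 \<le> M2"
        using off_diag[OF i] by (meson norm_ge_zero order_trans)
      then show ?thesis
        by simp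
    qed simp
    ultimately show ?thesis
      by (simp add: K_def)
  qed
  have "0 \<le> S"
    by (simp add: S_def sum_nonneg)
  have "S\<^sup>2 \<le> norm (p x x) * norm (p w w)"
    using Cauchy_Schwarz[of x w] \<open>0 \<le> S\<close> by (simp only: pxw norm_of_real abs_of_nonneg)
  also have "\<dots> \<le> norm (p x x) * (S * K)"
    using pww by (intro mult_left_mono) auto
  finally have "S * S \<le> S * (norm (p x x) * K)"
    by (simp add: power2_eq_square algebra_simps)
  then have "S \<le> norm (p x x) * K"
    using \<open>0 \<le> S\<close> \<open>0 \<le> K\<close> by (cases "S = 0") auto
  then show ?thesis
    by (simp add: S_def K_def c_def)
qed

lemma is_2ip_hermitian_form:
  assumes "conjugation cj" and "is_2ip scale cj ip"
  shows "hermitian_form cj scale (\<lambda>u v. ip u v z)"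
  using assms unfolding is_2ip_def hermitian_form_def hermitian_form_axioms_def by blast

lemma is_2ip_Bombieri_ineq:
  fixes ip :: "'v::ab_group_add \<Rightarrow> 'v \<Rightarrow> 'v \<Rightarrow> 'k::real_normed_field" and y :: "nat \<Rightarrow> 'v"
  assumes "conjugation cj" and "is_2ip scale cj ip" and "0 < n"
  shows "(\<Sum>i=1..n. (norm (ip x (y i) z))\<^sup>2)
    \<le> (two_norm ip x z)\<^sup>2 *
       (Max {(two_norm ip (y i) z)\<^sup>2 | i. i \<in> {1..n}}
        + real (n - 1) * Max {norm (ip (y i) (y j) z) | i j. i \<in> {1..n} \<and> j \<in> {1..n} \<and> i \<noteq> j})"
proof -
  interpret hermitian_form cj scale "\<lambda>u v. ip u v z"
    using assms(1,2) by (rule is_2ip_hermitian_form)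
  have two_norm_sq: "(two_norm ip u z)\<^sup>2 = norm (ip u u z)" for u
    by (simp add: two_norm_def)
  define M1 where "M1 = Max {norm (ip (y i) (y i) z) | i. i \<in> {1..n}}"
  define M2 where "M2 = Max {norm (ip (y i) (y j) z) | i j. i \<in> {1..n} \<and> j \<in> {1..n} \<and> i \<noteq> j}"
  have "(\<Sum>i\<in>{1..n}. (norm (ip x (y i) z))\<^sup>2) \<le> norm (ip x x z) * (M1 + real (card {1..n} - 1) * M2)"
  proof (rule Bombieri_ineq)
    show "{1..n} \<noteq> {}"
      using \<open>0 < n\<close> by simp
    show "norm (ip (y i) (y i) z) \<le> M1" if "i \<in> {1..n}" for i
      unfolding M1_def using that by (intro Max_ge) auto
    have "finite {norm (ip (y i) (y j) z) | i j. i \<in> {1..n} \<and> j \<in> {1..n} \<and> i \<noteq> j}"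
      by (rule finite_subset[of _ "(\<lambda>(i, j). norm (ip (y i) (y j) z)) ` ({1..n} \<times> {1..n})"]) auto
    then show "norm (ip (y i) (y j) z) \<le> M2" if "i \<in> {1..n}" "j \<in> {1..n}" "i \<noteq> j" for i j
      unfolding M2_def using that by (intro Max_ge) auto
  qed simp
  then show ?thesis
    unfolding two_norm_sq M1_def M2_def by simp
qed

theorem mainTheorem3:
  shows "(\<forall>(scale :: real \<Rightarrow> 'a::ab_group_add \<Rightarrow> 'a) ip (n::nat) x (y :: nat \<Rightarrow> 'a) z.
            is_2ip scale id ip \<and> n > 0 \<longrightarrow>
            (\<Sum>i=1..n. (norm (ip x (y i) z))\<^sup>2)
              \<le> (two_norm ip x z)\<^sup>2 *
                 (Max {(two_norm ip (y i) z)\<^sup>2 | i. i \<in> {1..n}}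
                  + real (n - 1) * Max {norm (ip (y i) (y j) z) | i j. i \<in> {1..n} \<and> j \<in> {1..n} \<and> i \<noteq> j}))
       \<and>
         (\<forall>(scale :: complex \<Rightarrow> 'b::ab_group_add \<Rightarrow> 'b) ip (n::nat) x (y :: nat \<Rightarrow> 'b) z.
            is_2ip scale cnj ip \<and> n > 0 \<longrightarrow>
            (\<Sum>i=1..n. (norm (ip x (y i) z))\<^sup>2)
              \<le> (two_norm ip x z)\<^sup>2 *
                 (Max {(two_norm ip (y i) z)\<^sup>2 | i. i \<in> {1..n}}
                  + real (n - 1) * Max {norm (ip (y i) (y j) z) | i j. i \<in> {1..n} \<and> j \<in> {1..n} \<and> i \<noteq> j}))"
  using is_2ip_Bombieri_ineq[OF conjugation_real] is_2ip_Bombieri_ineq[OF conjugation_complex]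
  by blast

end
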